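(* Let $m\ge\ell\ge k\ge 1$ and let ${\mathcal{C}}={\mathcal{C}}[\ell+m,\ell,k]$ be the recursive code with all design parameters equal to $0$. Suppose that for every admissible triple $(n,\ell,k)$ a map ${\mathcal{D}}^{\mathcal{K}}_{n,\ell,k}$ from subspaces of the ambient space to ${\mathcal{K}}[n,\ell,k]\cup\{?\}$ is given which, on input $U$, returns $V\in{\mathcal{K}}[n,\ell,k]$ if $d(U,V)<\ell-k+1$ for some $V\in{\mathcal{K}}[n,\ell,k]$, and returns $?$ otherwise. Define the decoder ${\mathcal{D}}_{\ell+m,\ell,k}$ recursively: on input $U\subseteq W$, let $Z={\mathcal{D}}^{\mathcal{K}}_{\ell+m,\ell,k}(U)$; if $Z=?$ and $m\ge 2\ell$, let $U'=U|_{\mathbb{F}}$ and $V'={\mathcal{D}}_{m,\ell,k}(U')$, and if $V'\neq ?$ set $Z=\{0^\ell\}\times V'$; return $Z$. Let $V\in{\mathcal{C}}$ be transmitted and $U\subseteq W$ received, with $\dim U=\ell-\kappa+\gamma$ and $\dim(U\cap V)=\ell-\kappa$. If $\kappa+\gamma<\ell-k+1$, then ${\mathcal{D}}_{\ell+m,\ell,k}(U)=V$.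
   Context: Let $q$ be a prime power. Subspace distance: $d(U,V)=\dim U+\dim V-2\dim(U\cap V)$. For $W=\langle A\rangle\times\mathbb{F}$ and a subspace $U\subseteq W$, $U|_{\mathbb{F}}=\{v_2 : (v_1,v_2)\in U\}$. Kötter–Kschischang code ${\mathcal{K}}[n,\ell,k]$ (for $n-\ell \ge \ell \ge k \ge 1$): put $m=n-\ell$, $\mathbb{F}=\mathbb{F}_{q^m}$, fix $\mathbb{F}_q$-linearly independent $\alpha_1,\dots,\alpha_\ell \in \mathbb{F}$, let $\langle A\rangle$ be their $\mathbb{F}_q$-span and $W = \langle A\rangle \times \mathbb{F}$. For a linearized polynomial $f(x)=\sum_{i=0}^{k-1} f_i x^{q^i}$ with $f_i\in\mathbb{F}$, let ${\mathcal{E}}(f)=\mathrm{span}_{\mathbb{F}_q}\{(\alpha_i,f(\alpha_i)) : 1\le i\le \ell\}$, and ${\mathcal{K}}[n,\ell,k]=\{{\mathcal{E}}(f)\}$. Distinct elements of ${\mathcal{K}}$ intersect in dimension at most $k-1$. Any $n$-dimensional $\mathbb{F}_q$-space is identified with such a $W$ via a fixed linear isomorphism. Recursive code with all design parameters $0$: ${\mathcal{C}}[\ell+m,\ell,k]$ (for $m\ge\ell\ge k$) in $W=\langle A\rangle\times\mathbb{F}_{q^m}$ is defined by: if $m<2\ell$, ${\mathcal{C}}={\mathcal{K}}[\ell+m,\ell,k]$; otherwise, letting ${\mathcal{C}}[m,\ell,k]=\{U_1,\dots,U_N\}$ be the recursively constructed code inside $\mathbb{F}_{q^m}$ (viewed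 as an $m$-dimensional $\mathbb{F}_q$-space), ${\mathcal{C}}[\ell+m,\ell,k]={\mathcal{K}}[\ell+m,\ell,k]\cup\{\{0\}\times U_\sigma : 1\le\sigma\le N\}$. *)

theory Defs
  imports Main
begin

text \<open>All fields F_{q^j} used are modelled as finite subfields of one ambient field of
type 'a; the scalar field F_q is a finite subfield Fq of 'a, and q = card Fq.
Vectors of an ambient space W = <A> x F_{q^j} are pairs in 'a x 'a.\<close>

definition is_subfield :: "'a::field set \<Rightarrow> bool" where
  "is_subfield S \<longleftrightarrow> 0 \<in> S \<and> 1 \<in> S \<and>
     (\<forall>x\<in>S. \<forall>y\<in>S. x + y \<in> S \<and> x * y \<in> S) \<and>
     (\<forall>x\<in>S. - x \<in> S) \<and> (\<forall>x\<in>S. x \<noteq> 0 \<longrightarrow> inverse x \<in> S)"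

definition fq_subspace :: "'a::field set \<Rightarrow> ('a \<times> 'a) set \<Rightarrow> bool" where
  "fq_subspace Fq U \<longleftrightarrow> (0, 0) \<in> U \<and>
     (\<forall>u\<in>U. \<forall>v\<in>U. (fst u + fst v, snd u + snd v) \<in> U) \<and>
     (\<forall>c\<in>Fq. \<forall>u\<in>U. (c * fst u, c * snd u) \<in> U)"

definition fq_lincomb :: "(nat \<Rightarrow> 'a::field) \<Rightarrow> ('a \<times> 'a) list \<Rightarrow> 'a \<times> 'a" where
  "fq_lincomb cs vs = ((\<Sum>i<length vs. cs i * fst (vs ! i)), (\<Sum>i<length vs. cs i * snd (vs ! i)))"

definition fq_span :: "'a::field set \<Rightarrow> ('a \<times> 'a) list \<Rightarrow> ('a \<times> 'a) set" where
  "fq_span Fq vs = {fq_lincomb cs vs | cs. \<forall>i<length vs. cs i \<in> Fq}"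

definition fq_dim :: "'a::field set \<Rightarrow> ('a \<times> 'a) set \<Rightarrow> nat" where
  "fq_dim Fq U = (LEAST n. \<exists>vs. length vs = n \<and> fq_span Fq vs = U)"

definition subspace_dist :: "'a::field set \<Rightarrow> ('a \<times> 'a) set \<Rightarrow> ('a \<times> 'a) set \<Rightarrow> int" where
  "subspace_dist Fq U V = int (fq_dim Fq U) + int (fq_dim Fq V) - 2 * int (fq_dim Fq (U \<inter> V))"

text \<open>F_q-linear independence of alpha_0, ..., alpha_{l-1} (indices shifted to start at 0).\<close>
definition fq_indep :: "'a::field set \<Rightarrow> nat \<Rightarrow> (nat \<Rightarrow> 'a) \<Rightarrow> bool" where
  "fq_indep Fq l \<alpha> \<longleftrightarrow> (\<forall>c. (\<forall>i<l. c i \<in> Fq) \<longrightarrow> (\<Sum>i<l. c i * \<alpha> i) = 0 \<longrightarrow> (\<forall>i<l. c i = 0))"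

definition span_A :: "'a::field set \<Rightarrow> nat \<Rightarrow> (nat \<Rightarrow> 'a) \<Rightarrow> 'a set" where
  "span_A Fq l \<alpha> = {(\<Sum>i<l. c i * \<alpha> i) | c. \<forall>i<l. c i \<in> Fq}"

definition ambient :: "'a::field set \<Rightarrow> 'a set \<Rightarrow> nat \<Rightarrow> (nat \<Rightarrow> 'a) \<Rightarrow> ('a \<times> 'a) set" where
  "ambient Fq F l \<alpha> = span_A Fq l \<alpha> \<times> F"

definition lin_eval :: "'a::field set \<Rightarrow> nat \<Rightarrow> (nat \<Rightarrow> 'a) \<Rightarrow> 'a \<Rightarrow> 'a" where
  "lin_eval Fq k f x = (\<Sum>i<k. f i * x ^ (card Fq ^ i))"

definition KK_E :: "'a::field set \<Rightarrow> nat \<Rightarrow> (nat \<Rightarrow> 'a) \<Rightarrow> nat \<Rightarrow> (nat \<Rightarrow> 'a) \<Rightarrow> ('a \<times> 'a) set" where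
  "KK_E Fq l \<alpha> k f = fq_span Fq (map (\<lambda>i. (\<alpha> i, lin_eval Fq k f (\<alpha> i))) [0..<l])"

definition KK_code :: "'a::field set \<Rightarrow> 'a set \<Rightarrow> nat \<Rightarrow> (nat \<Rightarrow> 'a) \<Rightarrow> nat \<Rightarrow> ('a \<times> 'a) set set" where
  "KK_code Fq F l \<alpha> k = {KK_E Fq l \<alpha> k f | f. \<forall>i<k. f i \<in> F}"

text \<open>Data indexed by the extension degree j of the second factor:
  F j = F_{q^j}, \<alpha> j the chosen basis elements of <A> in F_{q^j},
  \<phi> j : F_{q^j} \<rightarrow> <A_{j-l}> x F_{q^{j-l}} the fixed F_q-linear isomorphism.
  The recursive code C[l+j, l, k] (all design parameters 0).\<close>
fun rec_code :: "'a::field set \<Rightarrow> (nat \<Rightarrow> 'a set) \<Rightarrow> (nat \<Rightarrow> nat \<Rightarrow> 'a) \<Rightarrow> (nat \<Rightarrow> 'a \<Rightarrow> 'a \<times> 'a)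
      \<Rightarrow> nat \<Rightarrow> nat \<Rightarrow> nat \<Rightarrow> ('a \<times> 'a) set set" where
  "rec_code Fq F \<alpha> \<phi> l k j =
     (if 0 < l \<and> 2 * l \<le> j
      then KK_code Fq (F j) l (\<alpha> j) k \<union>
           {{0} \<times> (inv_into (F j) (\<phi> j) ` U) | U. U \<in> rec_code Fq F \<alpha> \<phi> l k (j - l)}
      else KK_code Fq (F j) l (\<alpha> j) k)"

text \<open>The recursive decoder D_{l+j,l,k}; DK j is the given bounded-distance decoder for
  K[l+j,l,k]; None plays the role of the failure symbol ?.\<close>
fun rec_dec :: "(nat \<Rightarrow> 'a set) \<Rightarrow> (nat \<Rightarrow> 'a \<Rightarrow> 'a \<times> 'a) \<Rightarrow> nat
      \<Rightarrow> (nat \<Rightarrow> ('a \<times> 'a) set \<Rightarrow> ('a \<times> 'a) set option)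
      \<Rightarrow> nat \<Rightarrow> ('a::zero \<times> 'a) set \<Rightarrow> ('a \<times> 'a) set option" where
  "rec_dec F \<phi> l DK j U =
     (case DK j U of
        Some Z \<Rightarrow> Some Z
      | None \<Rightarrow>
          (if 0 < l \<and> 2 * l \<le> j then
             (case rec_dec F \<phi> l DK (j - l) (\<phi> j ` (snd ` U)) of
                Some V' \<Rightarrow> Some ({0} \<times> (inv_into (F j) (\<phi> j) ` V'))
              | None \<Rightarrow> None)
           else None))"

text \<open>Extension degrees j = m - i l occurring in the recursion for C[l+m,l,k].\<close>
definition levels :: "nat \<Rightarrow> nat \<Rightarrow> nat set" where
  "levels m l = {j. \<exists>i. i * l + l \<le> m \<and> j = m - i * l}"

end

theory Submission
  imports Defs "HOL-Library.Product_Plus" "HOL-Library.FuncSet"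
begin

(* Write e(U,V) = l + dim U - 2 dim (U \<inter> V); for the transmitted V (of dimension l)
   this is the distance d(U,V) = kappa + gamma.  The proof is an induction on the
   extension degree j, running over the degrees m, m - l, m - 2l, ... of the recursion.
   If V is a Koetter-Kschischang codeword, e(U,V) = d(U,V) is below the decoding radius
   l - k + 1 and the Koetter-Kschischang decoder returns V.  Otherwise
   V = {0} x phi^-1(V') lies in {0} x F, which meets every Koetter-Kschischang codeword Y
   only in 0; hence dim (U \<inter> Y) + dim (U \<inter> V) \<le> dim U, which forces
   d(U,Y) > l + k - 1 \<ge> l - k + 1, so that decoder returns ?.  Projecting U to U' = phi(U|_F) does not raise its dimension
   and maps U \<inter> V injectively into U' \<inter> V', so e(U',V') \<le> e(U,V) and the induction
   hypothesis decodes U' to V'. *)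

declare rec_dec.simps[simp del] rec_code.simps[simp del]


definition scale_pair :: "'a::field \<Rightarrow> 'a \<times> 'a \<Rightarrow> 'a \<times> 'a" where
  "scale_pair c v = (c * fst v, c * snd v)"

lemma scale_pair_components[simp]:
  "fst (scale_pair c v) = c * fst v" "snd (scale_pair c v) = c * snd v"
  by (auto simp: scale_pair_def)

lemma scale_pair_add: "scale_pair c (u + v) = scale_pair c u + scale_pair c v"
  by (simp add: scale_pair_def prod_eq_iff algebra_simps)

lemma scale_pair_add_left: "scale_pair (c + d) v = scale_pair c v + scale_pair d v"
  by (simp add: scale_pair_def prod_eq_iff algebra_simps)

lemma scale_pair_diff_left: "scale_pair (c - d) v = scale_pair c v - scale_pair d v"
  by (simp add: scale_pair_def prod_eq_iff algebra_simps)

lemma scale_pair_mult: "scale_pair c (scale_pair d v) = scale_pair (c * d) v"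
  by (simp add: scale_pair_def)

lemma scale_pair_trivial[simp]:
  "scale_pair 1 v = v" "scale_pair 0 v = 0" "scale_pair c 0 = 0"
  by (simp_all add: scale_pair_def zero_prod_def)

lemma subfield_closed:
  assumes "is_subfield S"
  shows "0 \<in> S" "1 \<in> S" "x \<in> S \<Longrightarrow> y \<in> S \<Longrightarrow> x + y \<in> S"
    "x \<in> S \<Longrightarrow> y \<in> S \<Longrightarrow> x * y \<in> S" "x \<in> S \<Longrightarrow> y \<in> S \<Longrightarrow> x - y \<in> S"
  using assms unfolding is_subfield_def by auto (metis diff_conv_add_uminus)

lemma subfield_sum: "is_subfield S \<Longrightarrow> (\<And>i. i \<in> A \<Longrightarrow> f i \<in> S) \<Longrightarrow> sum f A \<in> S"
  by (induction A rule: infinite_finite_induct) (auto intro: subfield_closed)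

lemma subfield_power: "is_subfield S \<Longrightarrow> x \<in> S \<Longrightarrow> x ^ n \<in> S"
  by (induction n) (auto intro: subfield_closed)

text \<open>A finite field has at least two elements, so q^a \<le> q^b forces a \<le> b.\<close>
lemma card_subfield_ge2:
  assumes "is_subfield Fq" "finite Fq"
  shows "2 \<le> card Fq"
proof -
  have "{0, 1} \<subseteq> Fq" using subfield_closed[OF assms(1)] by auto
  then have "card {0::'a, 1} \<le> card Fq" using assms(2) by (rule card_mono[rotated])
  then show ?thesis by simp
qed


section \<open>Subspaces and spans\<close>

lemma fq_subspace_iff:
  "fq_subspace Fq U \<longleftrightarrow>
     0 \<in> U \<and> (\<forall>u\<in>U. \<forall>v\<in>U. u + v \<in> U) \<and> (\<forall>c\<in>Fq. \<forall>u\<in>U. scale_pair c u \<in> U)"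
  by (simp add: fq_subspace_def zero_prod_def scale_pair_def plus_prod_def)

lemma subspace_Int: "fq_subspace Fq A \<Longrightarrow> fq_subspace Fq B \<Longrightarrow> fq_subspace Fq (A \<inter> B)"
  by (auto simp: fq_subspace_iff)

lemma subspace_diff:
  assumes "is_subfield Fq" "fq_subspace Fq U" "u \<in> U" "v \<in> U"
  shows "u - v \<in> U"
proof -
  have "- 1 \<in> Fq" using assms(1) unfolding is_subfield_def by blast
  then have "scale_pair (- 1) v \<in> U" using assms(2,4) by (auto simp: fq_subspace_iff)
  moreover have "scale_pair (- 1) v = - v" by (simp add: scale_pair_def prod_eq_iff)
  ultimately show ?thesis using assms(2,3) by (auto simp: fq_subspace_iff)
qed

lemma fq_lincomb_scale: "fq_lincomb cs vs = (\<Sum>i<length vs. scale_pair (cs i) (vs ! i))"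
  by (simp add: fq_lincomb_def fst_sum snd_sum prod_eq_iff)

lemma span_Nil: "fq_span Fq [] = {0}"
  by (simp add: fq_span_def fq_lincomb_scale)

lemma span_Cons:
  "fq_span Fq (v # vs) = {scale_pair c v + x | c x. c \<in> Fq \<and> x \<in> fq_span Fq vs}"
proof (intro set_eqI iffI)
  fix y assume "y \<in> fq_span Fq (v # vs)"
  then obtain cs where cs: "\<forall>i<Suc (length vs). cs i \<in> Fq" "y = fq_lincomb cs (v # vs)"
    by (auto simp: fq_span_def)
  have "y = scale_pair (cs 0) v + fq_lincomb (\<lambda>i. cs (Suc i)) vs"
    unfolding cs fq_lincomb_scale by (simp only: length_Cons sum.lessThan_Suc_shift) simp
  moreover have "fq_lincomb (\<lambda>i. cs (Suc i)) vs \<in> fq_span Fq vs" "cs 0 \<in> Fq"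
    using cs by (auto simp: fq_span_def)
  ultimately show "y \<in> {scale_pair c v + x | c x. c \<in> Fq \<and> x \<in> fq_span Fq vs}" by blast
next
  fix y assume "y \<in> {scale_pair c v + x | c x. c \<in> Fq \<and> x \<in> fq_span Fq vs}"
  then obtain c ds where d: "c \<in> Fq" "\<forall>i<length vs. ds i \<in> Fq"
    "y = scale_pair c v + fq_lincomb ds vs"
    by (auto simp: fq_span_def)
  define cs where "cs = (\<lambda>i. if i = 0 then c else ds (i - 1))"
  have "y = fq_lincomb cs (v # vs)"
    unfolding d fq_lincomb_scale
    by (simp only: length_Cons sum.lessThan_Suc_shift) (simp add: cs_def)
  moreover have "\<forall>i<length (v # vs). cs i \<in> Fq" using d by (auto simp: cs_def)
  ultimately show "y \<in> fq_span Fq (v # vs)" by (auto simp: fq_span_def)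
qed

lemma span_Cons_image:
  "fq_span Fq (v # vs) = (\<lambda>(c, x). scale_pair c v + x) ` (Fq \<times> fq_span Fq vs)"
  unfolding span_Cons by auto

lemma span_subspace:
  assumes "is_subfield Fq"
  shows "fq_subspace Fq (fq_span Fq vs)"
proof (induction vs)
  case Nil
  then show ?case by (simp add: fq_subspace_iff span_Nil)
next
  case (Cons v vs)
  note Fq = subfield_closed[OF assms]
  let ?S = "fq_span Fq vs"
  have "(0::'a \<times> 'a) = scale_pair 0 v + 0" by simp
  then have "0 \<in> fq_span Fq (v # vs)" using Cons Fq unfolding span_Cons fq_subspace_iff by blast
  moreover have "u + w \<in> fq_span Fq (v # vs)"
    if hu: "u \<in> fq_span Fq (v # vs)" and hw: "w \<in> fq_span Fq (v # vs)" for u w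
  proof -
    obtain c x where "c \<in> Fq" "x \<in> ?S" and u: "u = scale_pair c v + x"
      using hu unfolding span_Cons by blast
    moreover obtain c' x' where "c' \<in> Fq" "x' \<in> ?S" and w: "w = scale_pair c' v + x'"
      using hw unfolding span_Cons by blast
    moreover have "u + w = scale_pair (c + c') v + (x + x')"
      using u w by (simp add: scale_pair_add_left algebra_simps)
    ultimately show ?thesis using Cons Fq unfolding span_Cons fq_subspace_iff by blast
  qed
  moreover have "scale_pair d u \<in> fq_span Fq (v # vs)"
    if hd: "d \<in> Fq" and hu: "u \<in> fq_span Fq (v # vs)" for d u
  proof -
    obtain c x where "c \<in> Fq" "x \<in> ?S" and u: "u = scale_pair c v + x"
      using hu unfolding span_Cons by blast
    moreover have "scale_pair d u = scale_pair (d * c) v + scale_pair d x"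
      using u by (simp add: scale_pair_add scale_pair_mult)
    ultimately show ?thesis using Cons Fq hd unfolding span_Cons fq_subspace_iff by blast
  qed
  ultimately show ?case unfolding fq_subspace_iff by blast
qed

lemma span_in_subspace:
  assumes "is_subfield Fq" "fq_subspace Fq S" "set vs \<subseteq> S"
  shows "fq_span Fq vs \<subseteq> S"
  using assms(3)
proof (induction vs)
  case Nil
  then show ?case using assms by (simp add: span_Nil fq_subspace_iff)
next
  case (Cons v vs)
  then show ?case using assms subfield_closed[OF assms(1)]
    by (auto simp: span_Cons fq_subspace_iff)
qed

lemma in_span:
  assumes "is_subfield Fq" "x \<in> set vs"
  shows "x \<in> fq_span Fq vs"
  using assms(2)
proof (induction vs)
  case Nil
  then show ?case by simp
next
  case (Cons v vs)
  note Fq = subfield_closed[OF assms(1)]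
  show ?case
  proof (cases "x = v")
    case True
    have "0 \<in> fq_span Fq vs" using span_subspace[OF assms(1)] by (auto simp: fq_subspace_iff)
    then show ?thesis
      unfolding span_Cons True using Fq(2) by (intro CollectI exI[of _ 1] exI[of _ 0]) simp
  next
    case False
    then have "x \<in> fq_span Fq vs" using Cons by simp
    then show ?thesis
      unfolding span_Cons using Fq(1) by (intro CollectI exI[of _ 0] exI[of _ x]) simp
  qed
qed

text \<open>Every finite subspace is spanned by a finite list (e.g. by the list of its elements).\<close>
lemma finite_subspace_spanned:
  assumes "is_subfield Fq" "fq_subspace Fq S" "finite S"
  shows "\<exists>vs. fq_span Fq vs = S"
proof -
  obtain vs where "set vs = S" using finite_list[OF assms(3)] by blast
  then show ?thesis using span_in_subspace[OF assms(1,2)] in_span[OF assms(1)] by blast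
qed


section \<open>Dimension and cardinality\<close>

text \<open>Adjoining a vector v outside a subspace S: the map (c, x) \<mapsto> c v + x on F_q x S
  is injective, so the span grows by a factor q.\<close>
lemma extend_inj:
  assumes SF: "is_subfield Fq" and S: "fq_subspace Fq S" and v: "v \<notin> S"
  shows "inj_on (\<lambda>(c, x). scale_pair c v + x) (Fq \<times> S)"
proof (rule inj_onI, clarify)
  fix c x c' x'
  assume a: "c \<in> Fq" "x \<in> S" "c' \<in> Fq" "x' \<in> S" "scale_pair c v + x = scale_pair c' v + x'"
  show "c = c' \<and> x = x'"
  proof (cases "c = c'")
    case True
    then show ?thesis using a by simp
  next
    case False
    have diff: "scale_pair (c - c') v = x' - x"
      using a(5) by (simp add: scale_pair_diff_left algebra_simps)
    have "v = scale_pair (inverse (c - c') * (c - c')) v" using False by simp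
    also have "\<dots> = scale_pair (inverse (c - c')) (x' - x)" by (simp flip: scale_pair_mult add: diff)
    finally have "v = scale_pair (inverse (c - c')) (x' - x)" .
    moreover have "inverse (c - c') \<in> Fq"
      using SF a subfield_closed(5)[OF SF] unfolding is_subfield_def by (metis inverse_zero)
    ultimately have "v \<in> S" using a S subspace_diff[OF SF S] by (auto simp: fq_subspace_iff)
    then show ?thesis using v by simp
  qed
qed

lemma span_card:
  assumes SF: "is_subfield Fq" and FF: "finite Fq"
  shows "\<exists>ws. length ws \<le> length vs \<and> fq_span Fq ws = fq_span Fq vs \<and>
              finite (fq_span Fq vs) \<and> card (fq_span Fq vs) = card Fq ^ length ws"
proof (induction vs)
  case Nil
  then show ?case by (auto simp: span_Nil)
next
  case (Cons v vs)
  note Fq = subfield_closed[OF SF]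
  from Cons obtain ws where ws: "length ws \<le> length vs" "fq_span Fq ws = fq_span Fq vs"
    "finite (fq_span Fq vs)" "card (fq_span Fq vs) = card Fq ^ length ws" by blast
  define S where "S = fq_span Fq vs"
  have S: "fq_subspace Fq S" unfolding S_def by (rule span_subspace[OF SF])
  show ?case
  proof (cases "v \<in> S")
    case True
    have "scale_pair c v + x \<in> S" if "c \<in> Fq" "x \<in> S" for c x
      using that True S by (auto simp: fq_subspace_iff)
    moreover have "x = scale_pair 0 v + x" for x by simp
    ultimately have "fq_span Fq (v # vs) = S"
      unfolding span_Cons S_def[symmetric] using Fq(1) by blast
    then show ?thesis using ws S_def by (intro exI[of _ ws]) auto
  next
    case False
    have inj: "inj_on (\<lambda>(c, x). scale_pair c v + x) (Fq \<times> S)"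
      using extend_inj[OF SF S False] .
    have "fq_span Fq (v # ws) = fq_span Fq (v # vs)" unfolding span_Cons_image ws(2) ..
    moreover have "finite (fq_span Fq (v # vs))"
      unfolding span_Cons_image using FF ws(3) by auto
    moreover have "card (fq_span Fq (v # vs)) = card Fq ^ length (v # ws)"
      unfolding span_Cons_image S_def[symmetric] card_image[OF inj]
      using ws(4) S_def by (simp add: card_cartesian_product)
    ultimately show ?thesis using ws(1) by (intro exI[of _ "v # ws"]) auto
  qed
qed

lemma dim_le_length: "fq_span Fq vs = S \<Longrightarrow> fq_dim Fq S \<le> length vs"
  unfolding fq_dim_def by (rule Least_le) blast

lemma card_subspace:
  assumes SF: "is_subfield Fq" and FF: "finite Fq" and S: "fq_subspace Fq S" "finite S"
  shows "card S = card Fq ^ fq_dim Fq S"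
proof -
  have "\<exists>n vs. length vs = n \<and> fq_span Fq vs = S"
    using finite_subspace_spanned[OF SF S] by blast
  then have "\<exists>vs. length vs = fq_dim Fq S \<and> fq_span Fq vs = S"
    unfolding fq_dim_def by (rule LeastI_ex)
  then obtain vs where vs: "length vs = fq_dim Fq S" "fq_span Fq vs = S" by blast
  obtain ws where ws: "length ws \<le> length vs" "fq_span Fq ws = S" "card S = card Fq ^ length ws"
    using span_card[OF SF FF, of vs] vs by auto
  have "fq_dim Fq S \<le> length ws" using dim_le_length[OF ws(2)] .
  then show ?thesis using ws vs by simp
qed

text \<open>Dimension is monotone in cardinality; this gives dim f(S) \<le> dim S and
  dim S \<le> dim T for injective f : S \<rightarrow> T, whether or not f is linear.\<close>
lemma dim_le_by_card:
  assumes SF: "is_subfield Fq" and FF: "finite Fq"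
    and S: "fq_subspace Fq S" "finite S" and T: "fq_subspace Fq T" "finite T"
    and card: "card S \<le> card T"
  shows "fq_dim Fq S \<le> fq_dim Fq T"
proof -
  have "card Fq ^ fq_dim Fq S \<le> card Fq ^ fq_dim Fq T"
    using card card_subspace[OF SF FF S] card_subspace[OF SF FF T] by simp
  then show ?thesis using card_subfield_ge2[OF SF FF] by (intro power_le_imp_le_exp) auto
qed

lemma dim_add_le:
  assumes SF: "is_subfield Fq" and FF: "finite Fq"
    and U: "fq_subspace Fq U" "finite U"
    and A: "fq_subspace Fq A" "A \<subseteq> U" and C: "fq_subspace Fq C" "C \<subseteq> U"
    and meet: "A \<inter> C \<subseteq> {0}"
  shows "fq_dim Fq A + fq_dim Fq C \<le> fq_dim Fq U"
proof -
  have fin: "finite A" "finite C" using A(2) C(2) U(2) finite_subset by auto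
  have inj: "inj_on (\<lambda>(a, c). a + c) (A \<times> C)"
  proof (rule inj_onI, clarify)
    fix a c a' c' assume a: "a \<in> A" "c \<in> C" "a' \<in> A" "c' \<in> C" "a + c = a' + c'"
    have "a - a' = c' - c" using a(5) by (simp add: algebra_simps)
    moreover have "a - a' \<in> A" "c' - c \<in> C" using subspace_diff[OF SF] A C a by auto
    ultimately have "a - a' = 0" using meet by auto
    then show "a = a' \<and> c = c'" using a(5) by simp
  qed
  have "a + c \<in> U" if "a \<in> A" "c \<in> C" for a c
    using that A(2) C(2) U(1) by (auto simp: fq_subspace_iff)
  then have "(\<lambda>(a, c). a + c) ` (A \<times> C) \<subseteq> U" by auto
  then have "card A * card C \<le> card U"
    using card_inj_on_le[OF inj _ U(2)] by (simp add: card_cartesian_product)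
  then have "card Fq ^ (fq_dim Fq A + fq_dim Fq C) \<le> card Fq ^ fq_dim Fq U"
    using card_subspace[OF SF FF] A(1) C(1) U fin by (simp add: power_add)
  then show ?thesis using card_subfield_ge2[OF SF FF] by (intro power_le_imp_le_exp) auto
qed


definition fq_linear_on :: "'a::field set \<Rightarrow> ('a \<times> 'a) set \<Rightarrow> ('a \<times> 'a \<Rightarrow> 'a \<times> 'a) \<Rightarrow> bool"
  where "fq_linear_on Fq S h \<longleftrightarrow>
    (\<forall>u\<in>S. \<forall>v\<in>S. h (u + v) = h u + h v) \<and>
    (\<forall>c\<in>Fq. \<forall>u\<in>S. h (scale_pair c u) = scale_pair c (h u))"

lemma subspace_image:
  assumes U: "fq_subspace Fq U" "U \<subseteq> S" and h: "fq_linear_on Fq S h"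
  shows "fq_subspace Fq (h ` U)"
proof -
  have add: "h (u + v) = h u + h v" if "u \<in> U" "v \<in> U" for u v
    using that U(2) h unfolding fq_linear_on_def by blast
  have "0 \<in> U" using U(1) by (simp add: fq_subspace_iff)
  then have "h 0 = h 0 + h 0" using add[of 0 0] U(2) h unfolding fq_linear_on_def by auto
  then have "h 0 = 0" by simp
  then have "0 \<in> h ` U" using \<open>0 \<in> U\<close> by force
  moreover have "h u + h v \<in> h ` U" if "u \<in> U" "v \<in> U" for u v
    using that U(1) add[of u v] h U(2) unfolding fq_subspace_iff fq_linear_on_def
    by (metis image_eqI subsetD)
  moreover have "scale_pair c (h u) \<in> h ` U" if "c \<in> Fq" "u \<in> U" for c u
    using that U(1) h U(2) unfolding fq_subspace_iff fq_linear_on_def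
    by (metis image_eqI subsetD)
  ultimately show ?thesis unfolding fq_subspace_iff by blast
qed

lemma inv_into_linear:
  fixes p :: "'a::field \<Rightarrow> 'a \<times> 'a"
  assumes bij: "bij_betw p A B" and A: "is_subfield A" "Fq \<subseteq> A"
    and add: "\<forall>x\<in>A. \<forall>y\<in>A. p (x + y) = p x + p y"
    and scale: "\<forall>c\<in>Fq. \<forall>x\<in>A. p (c * x) = scale_pair c (p x)"
  shows "\<And>x y. x \<in> B \<Longrightarrow> y \<in> B \<Longrightarrow> inv_into A p (x + y) = inv_into A p x + inv_into A p y"
    and "\<And>c x. c \<in> Fq \<Longrightarrow> x \<in> B \<Longrightarrow> inv_into A p (scale_pair c x) = c * inv_into A p x"
proof -
  note A_closed = subfield_closed[OF A(1)]
  have surj: "p ` A = B" and inj: "inj_on p A"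
    using bij by (auto simp: bij_betw_def)
  have inv_in: "inv_into A p x \<in> A" and p_inv: "p (inv_into A p x) = x" if "x \<in> B" for x
    using that surj by (auto intro: inv_into_into f_inv_into_f)
  have inv_p: "inv_into A p (p x) = x" if "x \<in> A" for x
    using that inj by (rule inv_into_f_f[rotated])
  show "inv_into A p (x + y) = inv_into A p x + inv_into A p y" if "x \<in> B" "y \<in> B" for x y
    using that inv_p[of "inv_into A p x + inv_into A p y"] add inv_in p_inv A_closed(3) by simp
  show "inv_into A p (scale_pair c x) = c * inv_into A p x" if "c \<in> Fq" "x \<in> B" for c x
  proof -
    have "c * inv_into A p x \<in> A" using that inv_in A_closed(4) A(2) by blast
    moreover have "p (c * inv_into A p x) = scale_pair c x" using that scale inv_in p_inv by simp
    ultimately show ?thesis using inv_p by metis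
  qed
qed


section \<open>Koetter-Kschischang codewords\<close>

lemma span_A_subset:
  assumes "is_subfield Fj" "Fq \<subseteq> Fj" "\<forall>i<l. \<alpha> i \<in> Fj"
  shows "span_A Fq l \<alpha> \<subseteq> Fj"
proof
  fix x assume "x \<in> span_A Fq l \<alpha>"
  then obtain c where c: "\<forall>i<l. c i \<in> Fq" "x = (\<Sum>i<l. c i * \<alpha> i)"
    unfolding span_A_def by blast
  show "x \<in> Fj" unfolding c(2)
  proof (rule subfield_sum[OF assms(1)])
    fix i assume "i \<in> {..<l}"
    then show "c i * \<alpha> i \<in> Fj" using c(1) assms by (intro subfield_closed(4)[OF assms(1)]) auto
  qed
qed

lemma zero_in_span_A: "0 \<in> Fq \<Longrightarrow> 0 \<in> span_A Fq l \<alpha>"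
  unfolding span_A_def by (auto intro!: exI[of _ "\<lambda>_. 0"])

lemma ambient_subset:
  assumes "is_subfield Fj" "Fq \<subseteq> Fj" "\<forall>i<l. \<alpha> i \<in> Fj"
  shows "ambient Fq Fj l \<alpha> \<subseteq> Fj \<times> Fj"
  using span_A_subset[OF assms] unfolding ambient_def by auto

lemma lin_eval_in:
  assumes "is_subfield Fj" "\<forall>i<k. f i \<in> Fj" "x \<in> Fj"
  shows "lin_eval Fq k f x \<in> Fj"
  unfolding lin_eval_def
proof (rule subfield_sum[OF assms(1)])
  fix i assume "i \<in> {..<k}"
  then show "f i * x ^ card Fq ^ i \<in> Fj"
    using assms by (intro subfield_closed(4)[OF assms(1)] subfield_power) auto
qed

lemma lincomb_graph:
  "fst (fq_lincomb cs (map (\<lambda>i. (\<alpha> i, g (\<alpha> i))) [0..<l])) = (\<Sum>i<l. cs i * \<alpha> i)"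
  "snd (fq_lincomb cs (map (\<lambda>i. (\<alpha> i, g (\<alpha> i))) [0..<l])) = (\<Sum>i<l. cs i * g (\<alpha> i))"
  by (simp_all add: fq_lincomb_def)

lemma indep_coeff_unique:
  assumes "is_subfield Fq" "fq_indep Fq l \<alpha>"
    and "\<forall>i<l. c i \<in> Fq" "\<forall>i<l. d i \<in> Fq" "(\<Sum>i<l. c i * \<alpha> i) = (\<Sum>i<l. d i * \<alpha> i)"
  shows "\<forall>i<l. c i = d i"
proof -
  have "(\<Sum>i<l. (c i - d i) * \<alpha> i) = 0"
    using assms(5) by (simp add: algebra_simps sum_subtractf)
  moreover have "\<forall>i<l. c i - d i \<in> Fq" using assms(3,4) subfield_closed(5)[OF assms(1)] by blast
  ultimately have "\<forall>i<l. c i - d i = 0"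
    using assms(2)[unfolded fq_indep_def, rule_format, of "\<lambda>i. c i - d i"] by blast
  then show ?thesis by simp
qed

lemma KK_E_coordinates:
  assumes "y \<in> KK_E Fq l \<alpha> k f"
  obtains cs where "\<forall>i<l. cs i \<in> Fq" "fst y = (\<Sum>i<l. cs i * \<alpha> i)"
    "snd y = (\<Sum>i<l. cs i * lin_eval Fq k f (\<alpha> i))"
proof -
  obtain cs where "\<forall>i<l. cs i \<in> Fq" "y = fq_lincomb cs (map (\<lambda>i. (\<alpha> i, lin_eval Fq k f (\<alpha> i))) [0..<l])"
    using assms unfolding KK_E_def fq_span_def length_map length_upt by auto
  then show ?thesis using that by (simp add: lincomb_graph)
qed

lemma KK_E_in_ambient:
  assumes "is_subfield Fj" "Fq \<subseteq> Fj" "\<forall>i<l. \<alpha> i \<in> Fj" "\<forall>i<k. f i \<in> Fj"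
  shows "KK_E Fq l \<alpha> k f \<subseteq> ambient Fq Fj l \<alpha>"
proof
  fix y assume "y \<in> KK_E Fq l \<alpha> k f"
  then obtain cs where cs: "\<forall>i<l. cs i \<in> Fq" "fst y = (\<Sum>i<l. cs i * \<alpha> i)"
    "snd y = (\<Sum>i<l. cs i * lin_eval Fq k f (\<alpha> i))" by (rule KK_E_coordinates)
  have "snd y \<in> Fj" unfolding cs(3)
  proof (rule subfield_sum[OF assms(1)])
    fix i assume "i \<in> {..<l}"
    then show "cs i * lin_eval Fq k f (\<alpha> i) \<in> Fj"
      using cs(1) assms by (intro subfield_closed(4)[OF assms(1)] lin_eval_in) auto
  qed
  moreover have "fst y \<in> span_A Fq l \<alpha>" unfolding span_A_def using cs(1,2) by blast
  ultimately show "y \<in> ambient Fq Fj l \<alpha>" by (simp add: ambient_def mem_Times_iff)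
qed

text \<open>E(f) meets {0} x F only in 0: the first coordinate determines the vector.\<close>
lemma KK_E_fst_zero:
  assumes "is_subfield Fq" "fq_indep Fq l \<alpha>" "y \<in> KK_E Fq l \<alpha> k f" "fst y = 0"
  shows "y = 0"
proof -
  obtain cs where cs: "\<forall>i<l. cs i \<in> Fq" "fst y = (\<Sum>i<l. cs i * \<alpha> i)"
    "snd y = (\<Sum>i<l. cs i * lin_eval Fq k f (\<alpha> i))" using assms(3) by (rule KK_E_coordinates)
  have "\<forall>i<l. cs i = 0"
    using indep_coeff_unique[OF assms(1,2) cs(1), of "\<lambda>_. 0"] cs(2) assms(4)
      subfield_closed(1)[OF assms(1)]
    by simp
  then show "y = 0" using cs(3) assms(4) by (simp add: prod_eq_iff)
qed

text \<open>E(f) has dimension l: the q^l coefficient vectors give q^l distinct elements.\<close>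
lemma KK_E_dim:
  assumes SF: "is_subfield Fq" "finite Fq"
    and Fj: "is_subfield Fj" "Fq \<subseteq> Fj" "finite Fj"
    and \<alpha>: "\<forall>i<l. \<alpha> i \<in> Fj" "fq_indep Fq l \<alpha>"
    and f: "\<forall>i<k. f i \<in> Fj"
  shows "fq_dim Fq (KK_E Fq l \<alpha> k f) = l"
proof -
  define vs where "vs = map (\<lambda>i. (\<alpha> i, lin_eval Fq k f (\<alpha> i))) [0..<l]"
  define P where "P = (\<Pi>\<^sub>E i\<in>{..<l}. Fq)"
  have E: "KK_E Fq l \<alpha> k f = fq_span Fq vs" and len: "length vs = l"
    by (simp_all add: KK_E_def vs_def)
  have subspace: "fq_subspace Fq (KK_E Fq l \<alpha> k f)" unfolding E by (rule span_subspace[OF SF(1)])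
  have fin: "finite (KK_E Fq l \<alpha> k f)"
    using KK_E_in_ambient[OF Fj(1,2) \<alpha>(1) f] ambient_subset[OF Fj(1,2) \<alpha>(1)] Fj(3)
      finite_subset[of _ "Fj \<times> Fj"] by blast
  have inj: "inj_on (\<lambda>c. fq_lincomb c vs) P"
  proof (rule inj_onI)
    fix c d assume cd: "c \<in> P" "d \<in> P" "fq_lincomb c vs = fq_lincomb d vs"
    have "(\<Sum>i<l. c i * \<alpha> i) = (\<Sum>i<l. d i * \<alpha> i)"
      using arg_cong[OF cd(3), of fst] by (simp add: vs_def lincomb_graph)
    then have "\<forall>i<l. c i = d i" using indep_coeff_unique[OF SF(1) \<alpha>(2), of c d] cd(1,2)
      by (auto simp: P_def)
    then show "c = d" using cd(1,2) unfolding P_def by (intro PiE_ext) auto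
  qed
  have "(\<lambda>c. fq_lincomb c vs) ` P \<subseteq> KK_E Fq l \<alpha> k f"
    unfolding E fq_span_def P_def len by blast
  then have "card Fq ^ l \<le> card (KK_E Fq l \<alpha> k f)"
    using card_inj_on_le[OF inj _ fin] by (simp add: P_def card_PiE)
  then have "card Fq ^ l \<le> card Fq ^ fq_dim Fq (KK_E Fq l \<alpha> k f)"
    using card_subspace[OF SF subspace fin] by simp
  then have "l \<le> fq_dim Fq (KK_E Fq l \<alpha> k f)"
    using card_subfield_ge2[OF SF] by (intro power_le_imp_le_exp) auto
  moreover have "fq_dim Fq (KK_E Fq l \<alpha> k f) \<le> l"
    using dim_le_length[OF E[symmetric]] len by simp
  ultimately show ?thesis by simp
qed


lemma levels_top: "l \<le> m \<Longrightarrow> m \<in> levels m l"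
  unfolding levels_def by (rule CollectI, rule exI[of _ 0]) simp

lemma levels_step:
  assumes "j \<in> levels m l" "2 * l \<le> j"
  shows "j - l \<in> levels m l"
proof -
  obtain i where i: "i * l + l \<le> m" "j = m - i * l" using assms(1) unfolding levels_def by blast
  have "Suc i * l + l \<le> m" "j - l = m - Suc i * l" using i assms(2) by auto
  then show ?thesis unfolding levels_def by blast
qed

lemma rec_code_cases:
  assumes "V \<in> rec_code Fq F \<alpha> \<phi> l k j"
  obtains "V \<in> KK_code Fq (F j) l (\<alpha> j) k"
  | V' where "0 < l" "2 * l \<le> j" "V' \<in> rec_code Fq F \<alpha> \<phi> l k (j - l)"
      "V = {0} \<times> inv_into (F j) (\<phi> j) ` V'"
  using assms rec_code.simps[of Fq F \<alpha> \<phi> l k j] by (auto split: if_splits)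


section \<open>Correctness of the recursive decoder\<close>

locale recursive_decoding =
  fixes Fq :: "'a::field set" and F :: "nat \<Rightarrow> 'a set" and \<alpha> :: "nat \<Rightarrow> nat \<Rightarrow> 'a"
    and \<phi> :: "nat \<Rightarrow> 'a \<Rightarrow> 'a \<times> 'a"
    and DK :: "nat \<Rightarrow> ('a \<times> 'a) set \<Rightarrow> ('a \<times> 'a) set option"
    and m l k :: nat
  assumes k_pos: "1 \<le> k"
    and Fq: "finite Fq" "is_subfield Fq"
    and field: "\<And>j. j \<in> levels m l \<Longrightarrow> is_subfield (F j) \<and> Fq \<subseteq> F j \<and> finite (F j)"
    and alpha: "\<And>j. j \<in> levels m l \<Longrightarrow> (\<forall>i<l. \<alpha> j i \<in> F j) \<and> fq_indep Fq l (\<alpha> j)"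
    and phi: "\<And>j. j \<in> levels m l \<Longrightarrow> 2 * l \<le> j \<Longrightarrow>
               bij_betw (\<phi> j) (F j) (ambient Fq (F (j - l)) l (\<alpha> (j - l))) \<and>
               (\<forall>x\<in>F j. \<forall>y\<in>F j. \<phi> j (x + y) =
                   (fst (\<phi> j x) + fst (\<phi> j y), snd (\<phi> j x) + snd (\<phi> j y))) \<and>
               (\<forall>c\<in>Fq. \<forall>x\<in>F j. \<phi> j (c * x) = (c * fst (\<phi> j x), c * snd (\<phi> j x)))"
    and DK_spec: "\<And>j X. j \<in> levels m l \<Longrightarrow> fq_subspace Fq X \<Longrightarrow>
               X \<subseteq> ambient Fq (F j) l (\<alpha> j) \<Longrightarrow>
               (\<forall>Y\<in>KK_code Fq (F j) l (\<alpha> j) k.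
                   subspace_dist Fq X Y < int l - int k + 1 \<longrightarrow> DK j X = Some Y) \<and>
               ((\<forall>Y\<in>KK_code Fq (F j) l (\<alpha> j) k.
                   \<not> subspace_dist Fq X Y < int l - int k + 1) \<longrightarrow> DK j X = None)"
begin

abbreviation amb :: "nat \<Rightarrow> ('a \<times> 'a) set" where
  "amb j \<equiv> ambient Fq (F j) l (\<alpha> j)"

abbreviation lift :: "nat \<Rightarrow> 'a \<times> 'a \<Rightarrow> 'a" where
  "lift j \<equiv> inv_into (F j) (\<phi> j)"

lemma finite_in_amb:
  assumes "j \<in> levels m l" "X \<subseteq> amb j"
  shows "finite X"
proof -
  have "is_subfield (F j)" "Fq \<subseteq> F j" "finite (F j)" "\<forall>i<l. \<alpha> j i \<in> F j"
    using field[OF assms(1)] alpha[OF assms(1)] by auto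
  then have "X \<subseteq> F j \<times> F j" "finite (F j \<times> F j)"
    using assms(2) ambient_subset[of "F j" Fq l "\<alpha> j"] by auto
  then show ?thesis by (rule finite_subset)
qed

lemma KK_codeword:
  assumes "j \<in> levels m l" "Y \<in> KK_code Fq (F j) l (\<alpha> j) k"
  shows "fq_subspace Fq Y" "Y \<subseteq> amb j" "fq_dim Fq Y = l" "\<And>y. y \<in> Y \<Longrightarrow> fst y = 0 \<Longrightarrow> y = 0"
proof -
  obtain f where f: "\<forall>i<k. f i \<in> F j" "Y = KK_E Fq l (\<alpha> j) k f"
    using assms(2) unfolding KK_code_def by blast
  have data: "is_subfield (F j)" "Fq \<subseteq> F j" "finite (F j)" "\<forall>i<l. \<alpha> j i \<in> F j"
    "fq_indep Fq l (\<alpha> j)"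
    using field[OF assms(1)] alpha[OF assms(1)] by auto
  show "fq_subspace Fq Y" unfolding f(2) KK_E_def by (rule span_subspace[OF Fq(2)])
  show "Y \<subseteq> amb j" unfolding f(2) using KK_E_in_ambient[OF data(1,2,4) f(1)] .
  show "fq_dim Fq Y = l" unfolding f(2) using KK_E_dim[OF Fq(2,1) data f(1)] .
  show "y = 0" if "y \<in> Y" "fst y = 0" for y
    using KK_E_fst_zero[OF Fq(2) data(5)] that unfolding f(2) by blast
qed

lemma phi_linear:
  assumes "j \<in> levels m l" "2 * l \<le> j"
  shows "bij_betw (\<phi> j) (F j) (amb (j - l))"
    and "\<forall>x\<in>F j. \<forall>y\<in>F j. \<phi> j (x + y) = \<phi> j x + \<phi> j y"
    and "\<forall>c\<in>Fq. \<forall>x\<in>F j. \<phi> j (c * x) = scale_pair c (\<phi> j x)"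
  using phi[OF assms] by (auto simp: plus_prod_def scale_pair_def)

lemma lift_linear:
  assumes "j \<in> levels m l" "2 * l \<le> j"
  shows "fq_linear_on Fq (amb (j - l)) (\<lambda>y. (0, lift j y))"
proof -
  have "is_subfield (F j)" "Fq \<subseteq> F j" using field[OF assms(1)] by auto
  from inv_into_linear[OF phi_linear(1)[OF assms] this phi_linear(2,3)[OF assms]]
  show ?thesis by (simp add: fq_linear_on_def scale_pair_def)
qed

lemma projection_linear:
  assumes "j \<in> levels m l" "2 * l \<le> j"
  shows "fq_linear_on Fq (amb j) (\<lambda>x. \<phi> j (snd x))"
proof -
  have "snd x \<in> F j" if "x \<in> amb j" for x using that by (auto simp: ambient_def)
  moreover have "Fq \<subseteq> F j" using field[OF assms(1)] by blast
  ultimately show ?thesis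
    using phi_linear(2,3)[OF assms] field[OF assms(1)]
    by (auto simp: fq_linear_on_def subset_iff)
qed

lemma codeword_subspace:
  "j \<in> levels m l \<Longrightarrow> Y \<in> rec_code Fq F \<alpha> \<phi> l k j \<Longrightarrow> fq_subspace Fq Y \<and> Y \<subseteq> amb j"
proof (induction j arbitrary: Y rule: less_induct)
  case (less j)
  from less.prems(2) show ?case
  proof (cases rule: rec_code_cases)
    case 1
    then show ?thesis using KK_codeword[OF less.prems(1)] by blast
  next
    case (2 Y')
    have level: "j - l \<in> levels m l" using levels_step[OF less.prems(1) 2(2)] .
    have Y': "fq_subspace Fq Y'" "Y' \<subseteq> amb (j - l)"
      using less.IH[OF _ level 2(3)] 2(1,2) by auto
    have Y: "Y = (\<lambda>y. (0, lift j y)) ` Y'" using 2(4) by auto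
    have "lift j y \<in> F j" if "y \<in> amb (j - l)" for y
      using that bij_betw_imp_surj_on[OF phi_linear(1)[OF less.prems(1) 2(2)]] by (auto intro: inv_into_into)
    moreover have "0 \<in> span_A Fq l (\<alpha> j)" using zero_in_span_A subfield_closed(1)[OF Fq(2)] .
    ultimately have "Y \<subseteq> amb j" using Y Y'(2) by (auto simp: ambient_def)
    moreover have "fq_subspace Fq Y"
      unfolding Y using subspace_image[OF Y' lift_linear[OF less.prems(1) 2(2)]] .
    ultimately show ?thesis by blast
  qed
qed

text \<open>If V \<subseteq> {0} x F and U is close to V, then U is far from every Koetter-Kschischang
  codeword Y: U \<inter> Y and U \<inter> V meet only in 0, so dim (U \<inter> Y) \<le> dim U - dim (U \<inter> V).\<close>
lemma KK_decoder_rejects: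
  assumes j: "j \<in> levels m l" and U: "fq_subspace Fq U" "U \<subseteq> amb j"
    and V: "fq_subspace Fq V" "\<forall>v\<in>V. fst v = 0"
    and close: "int l + int (fq_dim Fq U) - 2 * int (fq_dim Fq (U \<inter> V)) < int l - int k + 1"
  shows "DK j U = None"
proof -
  have "\<not> subspace_dist Fq U Y < int l - int k + 1" if Y: "Y \<in> KK_code Fq (F j) l (\<alpha> j) k" for Y
  proof -
    note Y_props = KK_codeword[OF j Y]
    have "U \<inter> Y \<inter> (U \<inter> V) \<subseteq> {0}" using Y_props(4) V(2) by blast
    then have "fq_dim Fq (U \<inter> Y) + fq_dim Fq (U \<inter> V) \<le> fq_dim Fq U"
      using dim_add_le[OF Fq(2,1) U(1) finite_in_amb[OF j U(2)]] subspace_Int U(1) Y_props(1) V(1)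
      by blast
    then show ?thesis unfolding subspace_dist_def Y_props(3) using close k_pos by linarith
  qed
  then show ?thesis using DK_spec[OF j U] by blast
qed

lemma projection_dims:
  assumes j: "j \<in> levels m l" "2 * l \<le> j"
    and U: "fq_subspace Fq U" "U \<subseteq> amb j"
    and V': "fq_subspace Fq V'" "V' \<subseteq> amb (j - l)"
    and V: "V = {0} \<times> lift j ` V'"
  defines "U' \<equiv> \<phi> j ` snd ` U"
  shows "fq_subspace Fq U'" "U' \<subseteq> amb (j - l)"
    and "fq_dim Fq U' \<le> fq_dim Fq U" "fq_dim Fq (U \<inter> V) \<le> fq_dim Fq (U' \<inter> V')"
proof -
  let ?p = "\<lambda>x. \<phi> j (snd x)"
  note bij = phi_linear(1)[OF j]
  have level: "j - l \<in> levels m l" using levels_step[OF j] .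
  have U'_image: "U' = ?p ` U" unfolding U'_def by auto
  have snd_U: "snd x \<in> F j" if "x \<in> U" for x using that U(2) by (auto simp: ambient_def)
  show U'_sub: "fq_subspace Fq U'"
    unfolding U'_image using subspace_image[OF U projection_linear[OF j]] .
  show U'_amb: "U' \<subseteq> amb (j - l)"
    unfolding U'_image using snd_U bij_betw_apply[OF bij] by auto
  have fin_U: "finite U" using finite_in_amb[OF j(1) U(2)] .
  have fin_U': "finite U'" using finite_in_amb[OF level U'_amb] .
  show "fq_dim Fq U' \<le> fq_dim Fq U"
    using dim_le_by_card[OF Fq(2,1) U'_sub fin_U' U(1) fin_U] card_image_le[OF fin_U, of ?p]
    unfolding U'_image by blast
  have "V = (\<lambda>y. (0, lift j y)) ` V'" unfolding V by auto
  then have "fq_subspace Fq V" using subspace_image[OF V' lift_linear[OF j]] by simp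
  have inj: "inj_on ?p (U \<inter> V)"
  proof (rule inj_onI)
    fix x y assume xy: "x \<in> U \<inter> V" "y \<in> U \<inter> V" "?p x = ?p y"
    then have "snd x = snd y" using inj_onD[OF bij_betw_imp_inj_on[OF bij] xy(3)] snd_U by blast
    moreover have "fst x = fst y" using xy(1,2) V by auto
    ultimately show "x = y" by (simp add: prod_eq_iff)
  qed
  have "?p x \<in> U' \<inter> V'" if hx: "x \<in> U \<inter> V" for x
  proof -
    obtain v where v: "v \<in> V'" "x = (0, lift j v)" using hx V by auto
    have "?p x = v"
      using v f_inv_into_f[of v "\<phi> j" "F j"] bij_betw_imp_surj_on[OF bij] V'(2) by auto
    then show ?thesis using hx v(1) unfolding U'_image by auto
  qed
  then have "card (U \<inter> V) \<le> card (U' \<inter> V')"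
    using card_inj_on_le[OF inj] fin_U' by blast
  then show "fq_dim Fq (U \<inter> V) \<le> fq_dim Fq (U' \<inter> V')"
    using dim_le_by_card[OF Fq(2,1) subspace_Int[OF U(1) \<open>fq_subspace Fq V\<close>] _
        subspace_Int[OF U'_sub V'(1)]] fin_U fin_U'
    by simp
qed

lemma decoder_correct:
  "j \<in> levels m l \<Longrightarrow> V \<in> rec_code Fq F \<alpha> \<phi> l k j \<Longrightarrow> fq_subspace Fq U \<Longrightarrow> U \<subseteq> amb j \<Longrightarrow>
   int l + int (fq_dim Fq U) - 2 * int (fq_dim Fq (U \<inter> V)) < int l - int k + 1 \<Longrightarrow>
   rec_dec F \<phi> l DK j U = Some V"
proof (induction j arbitrary: U V rule: less_induct)
  case (less j)
  note j = less.prems(1) and U = less.prems(3,4) and close = less.prems(5)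
  from less.prems(2) show ?case
  proof (cases rule: rec_code_cases)
    case 1
    then have "subspace_dist Fq U V < int l - int k + 1"
      using close KK_codeword(3)[OF j] unfolding subspace_dist_def by simp
    then have "DK j U = Some V" using DK_spec[OF j U] 1 by blast
    then show ?thesis by (simp add: rec_dec.simps)
  next
    case (2 V')
    have level: "j - l \<in> levels m l" using levels_step[OF j 2(2)] .
    have V': "fq_subspace Fq V'" "V' \<subseteq> amb (j - l)" using codeword_subspace[OF level 2(3)] by auto
    note dims = projection_dims[OF j 2(2) U V' 2(4)]
    have "fq_subspace Fq V" using codeword_subspace[OF j less.prems(2)] by blast
    then have "DK j U = None" using KK_decoder_rejects[OF j U _ _ close] 2(4) by auto
    moreover have "rec_dec F \<phi> l DK (j - l) (\<phi> j ` snd ` U) = Some V'"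
    proof (rule less.IH[OF _ level 2(3) dims(1,2)])
      show "j - l < j" using 2(1,2) by simp
      show "int l + int (fq_dim Fq (\<phi> j ` snd ` U)) - 2 * int (fq_dim Fq (\<phi> j ` snd ` U \<inter> V'))
          < int l - int k + 1"
        using dims(3,4) close by linarith
    qed
    ultimately show ?thesis using 2 by (simp add: rec_dec.simps[of _ _ _ _ j])
  qed
qed

end


theorem mainTheorem4:
  fixes Fq :: "'a::field set"
    and F :: "nat \<Rightarrow> 'a set"
    and \<alpha> :: "nat \<Rightarrow> nat \<Rightarrow> 'a"
    and \<phi> :: "nat \<Rightarrow> 'a \<Rightarrow> 'a \<times> 'a"
    and DK :: "nat \<Rightarrow> ('a \<times> 'a) set \<Rightarrow> ('a \<times> 'a) set option"
    and m l k :: nat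
    and \<kappa> \<gamma> :: int
    and U V :: "('a \<times> 'a) set"
  assumes params: "1 \<le> k" "k \<le> l" "l \<le> m"
    and Fq: "finite Fq" "is_subfield Fq"
    and Fj: "\<And>j. j \<in> levels m l \<Longrightarrow>
               is_subfield (F j) \<and> Fq \<subseteq> F j \<and> finite (F j) \<and> card (F j) = card Fq ^ j"
    and alpha: "\<And>j. j \<in> levels m l \<Longrightarrow>
               (\<forall>i<l. \<alpha> j i \<in> F j) \<and> fq_indep Fq l (\<alpha> j)"
    and phi: "\<And>j. j \<in> levels m l \<Longrightarrow> 2 * l \<le> j \<Longrightarrow>
               bij_betw (\<phi> j) (F j) (ambient Fq (F (j - l)) l (\<alpha> (j - l))) \<and>
               (\<forall>x\<in>F j. \<forall>y\<in>F j. \<phi> j (x + y) =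
                   (fst (\<phi> j x) + fst (\<phi> j y), snd (\<phi> j x) + snd (\<phi> j y))) \<and>
               (\<forall>c\<in>Fq. \<forall>x\<in>F j. \<phi> j (c * x) = (c * fst (\<phi> j x), c * snd (\<phi> j x)))"
    and DK_spec: "\<And>j X. j \<in> levels m l \<Longrightarrow> fq_subspace Fq X \<Longrightarrow>
               X \<subseteq> ambient Fq (F j) l (\<alpha> j) \<Longrightarrow>
               (\<forall>Y\<in>KK_code Fq (F j) l (\<alpha> j) k.
                   subspace_dist Fq X Y < int l - int k + 1 \<longrightarrow> DK j X = Some Y) \<and>
               ((\<forall>Y\<in>KK_code Fq (F j) l (\<alpha> j) k.
                   \<not> subspace_dist Fq X Y < int l - int k + 1) \<longrightarrow> DK j X = None)"
    and V: "V \<in> rec_code Fq F \<alpha> \<phi> l k m"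
    and U: "fq_subspace Fq U" "U \<subseteq> ambient Fq (F m) l (\<alpha> m)"
    and dimU: "int (fq_dim Fq U) = int l - \<kappa> + \<gamma>"
    and dimUV: "int (fq_dim Fq (U \<inter> V)) = int l - \<kappa>"
    and small: "\<kappa> + \<gamma> < int l - int k + 1"
  shows "rec_dec F \<phi> l DK m U = Some V"
proof -
  interpret recursive_decoding Fq F \<alpha> \<phi> DK m l k
    using params(1) Fq Fj alpha phi DK_spec by unfold_locales blast+
  have "int l + int (fq_dim Fq U) - 2 * int (fq_dim Fq (U \<inter> V)) < int l - int k + 1"
    using dimU dimUV small by linarith
  then show ?thesis using decoder_correct[OF levels_top[OF params(3)] V U] by blast
qed

end
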